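(* The quadric surface $Q$ is tangent to all five coordinate hyperplanes $x_i=0$ ($i=0,\ldots,4$) of $\mathbf{P}^4$. The points of tangency are $(0:3:3:1:1)$, $(3:0:3:1:1)$, $(3:3:0:1:1)$, $(1:1:1:0:1)$, and $(1:1:1:1:0)$.
   Context: $Q\subset\mathbf{P}^4$ is the quadric surface $l=q=0$ with $l:=x_0+x_1+x_2-3x_3-3x_4$ and $q:=x_0^2+x_1^2+x_2^2+9x_3^2-x_0x_1-x_0x_2-3x_0x_3-x_1x_2-3x_1x_3-3x_2x_3$. A surface $S\subset\mathbf{P}^4$ is tangent to a hyperplane $H$ at a point $P\in S$ if the tangent plane $T_PS$ is contained in $H$. *)

theory Defs
  imports "HOL-Analysis.Analysis" "HOL-Library.Numeral_Type"
begin

text \<open>Homogeneous coordinates (x0:...:x4) of P^4 over the complex numbers are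
  represented by vectors in complex^5, indexed by the type 5 = {0,1,2,3,4}.\<close>

definition pt5 :: "complex \<Rightarrow> complex \<Rightarrow> complex \<Rightarrow> complex \<Rightarrow> complex \<Rightarrow> complex^5" where
  "pt5 a b c d e = (\<chi> i. if i = 0 then a else if i = 1 then b else if i = 2 then c
                          else if i = 3 then d else e)"

definition lQ :: "complex^5 \<Rightarrow> complex" where
  "lQ x = x$0 + x$1 + x$2 - 3 * x$3 - 3 * x$4"

definition qQ :: "complex^5 \<Rightarrow> complex" where
  "qQ x = (x$0)^2 + (x$1)^2 + (x$2)^2 + 9 * (x$3)^2
          - x$0 * x$1 - x$0 * x$2 - 3 * x$0 * x$3 - x$1 * x$2 - 3 * x$1 * x$3 - 3 * x$2 * x$3"

definition on_Q :: "complex^5 \<Rightarrow> bool" where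
  "on_Q P \<longleftrightarrow> P \<noteq> 0 \<and> lQ P = 0 \<and> qQ P = 0"

text \<open>The (embedded projective) tangent plane T_P Q is the projectivisation of the
  common kernel of the differentials of l and q at P.  Q is tangent to the
  coordinate hyperplane {x_j = 0} at P if T_P Q is contained in it.\<close>
definition tangent_to_coord_hyperplane :: "5 \<Rightarrow> complex^5 \<Rightarrow> bool" where
  "tangent_to_coord_hyperplane j P \<longleftrightarrow> on_Q P \<and>
     (\<forall>v. frechet_derivative lQ (at P) v = 0 \<and> frechet_derivative qQ (at P) v = 0
          \<longrightarrow> v $ j = 0)"

definition proj_eq :: "complex^5 \<Rightarrow> complex^5 \<Rightarrow> bool" where
  "proj_eq x y \<longleftrightarrow> (\<exists>c. c \<noteq> 0 \<and> x = c *s y)"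

end

theory Submission
  imports Defs
begin

text \<open>Since l is linear, the tangent plane of Q at P is the kernel of l intersected with the kernel
  of the differential of q at P.  Choosing a vector in the kernel of l off the hyperplane
  x_j = 0, the inclusion of that intersection in x_j = 0 turns into the inclusion of
  ker l \<inter> {x_j = 0} in the kernel of dq_P.  Evaluating dq_P on a basis of the plane
  ker l \<inter> {x_j = 0} gives three linear equations in P which, together with l(P) = 0,
  cut out exactly the listed point.  Conversely, at that point dq_P = a l + b x_j with b \<noteq> 0,
  so tangency is immediate.\<close>

lemma kernel_inclusion_swap:
  fixes f g h :: "'b::ab_group_add \<Rightarrow> 'a::field"
  assumes f: "Vector_Spaces.linear s (*) f" and g: "Vector_Spaces.linear s (*) g"
    and h: "Vector_Spaces.linear s (*) h"
    and ker: "\<And>v. f v = 0 \<Longrightarrow> g v = 0 \<Longrightarrow> h v = 0"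
    and u: "f u = 0" "h u \<noteq> 0" and w: "f w = 0" "h w = 0"
  shows "g w = 0"
proof -
  define v where "v = s (g u) w - s (g w) u"
  have lin_v: "k v = g u * k w - g w * k u" if "Vector_Spaces.linear s (*) k" for k
    using that by (simp add: v_def linear_iff_module_hom module_hom.diff module_hom.scale)
  have "f v = 0" "g v = 0"
    using u(1) w(1) by (simp_all add: lin_v[OF f] lin_v[OF g] mult.commute)
  then have "h v = 0"
    by (rule ker)
  then show ?thesis
    using u(2) w(2) by (simp add: lin_v[OF h])
qed

lemma exhaust_5:
  fixes x :: 5
  shows "x = 0 \<or> x = 1 \<or> x = 2 \<or> x = 3 \<or> x = 4"
proof (induct x)
  case (of_int z)
  then have "z = 0 \<or> z = 1 \<or> z = 2 \<or> z = 3 \<or> z = 4" by fastforce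
  then show ?case by auto
qed

lemma forall_5: "(\<forall>i::5. P i) \<longleftrightarrow> P 0 \<and> P 1 \<and> P 2 \<and> P 3 \<and> P 4"
  by (metis exhaust_5)

lemma vec5_eq_iff: "x = y \<longleftrightarrow> x$0 = y$0 \<and> x$1 = y$1 \<and> x$2 = y$2 \<and> x$3 = y$3 \<and> x$4 = y$4"
  for x y :: "'a^5"
  by (simp add: vec_eq_iff forall_5)

lemma pt5_nth [simp]:
  "pt5 a b c d e $ 0 = a" "pt5 a b c d e $ 1 = b" "pt5 a b c d e $ 2 = c"
  "pt5 a b c d e $ 3 = d" "pt5 a b c d e $ 4 = e"
  by (simp_all add: pt5_def)

definition qQ_deriv :: "complex^5 \<Rightarrow> complex^5 \<Rightarrow> complex" where
  "qQ_deriv P v =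
     (2 * P$0 - P$1 - P$2 - 3 * P$3) * v$0 + (2 * P$1 - P$0 - P$2 - 3 * P$3) * v$1
     + (2 * P$2 - P$0 - P$1 - 3 * P$3) * v$2 + (18 * P$3 - 3 * P$0 - 3 * P$1 - 3 * P$2) * v$3"

lemma has_derivative_vec_nth [derivative_intros]: "((\<lambda>x. x $ i) has_derivative (\<lambda>x. x $ i)) F"
  by (rule bounded_linear_imp_has_derivative[OF bounded_linear_vec_nth])

lemma frechet_derivative_lQ: "frechet_derivative lQ (at P) = lQ"
proof -
  have "(lQ has_derivative lQ) (at P)"
    unfolding lQ_def[abs_def]
    by (auto intro!: derivative_eq_intros)
  then show ?thesis
    by (rule frechet_derivative_at[symmetric])
qed

lemma frechet_derivative_qQ: "frechet_derivative qQ (at P) = qQ_deriv P"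
proof -
  have "(qQ has_derivative qQ_deriv P) (at P)"
    unfolding qQ_def[abs_def] qQ_deriv_def[abs_def] power2_eq_square
    by (auto intro!: derivative_eq_intros simp: algebra_simps fun_eq_iff)
  then show ?thesis
    by (rule frechet_derivative_at[symmetric])
qed

lemma linear_lQ: "Vector_Spaces.linear (*s) (*) lQ"
  by (simp add: Vector_Spaces.linear_iff vec.vector_space_axioms
      vector_space_over_itself.vector_space_axioms lQ_def algebra_simps)

lemma linear_qQ_deriv: "Vector_Spaces.linear (*s) (*) (qQ_deriv P)"
  by (simp add: Vector_Spaces.linear_iff vec.vector_space_axioms
      vector_space_over_itself.vector_space_axioms qQ_deriv_def algebra_simps)

lemma linear_vec_nth: "Vector_Spaces.linear (*s) (*) (\<lambda>v. v $ i)"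
  by (simp add: Vector_Spaces.linear_iff vec.vector_space_axioms
      vector_space_over_itself.vector_space_axioms)

lemma lQ_scale: "lQ (c *s x) = c * lQ x"
  by (simp add: lQ_def algebra_simps)

lemma qQ_scale: "qQ (c *s x) = c\<^sup>2 * qQ x"
  by (simp add: qQ_def power2_eq_square algebra_simps)

lemma qQ_deriv_scale: "qQ_deriv (c *s P) v = c * qQ_deriv P v"
  by (simp add: qQ_deriv_def algebra_simps)

lemma tangent_to_coord_hyperplane_iff:
  "tangent_to_coord_hyperplane j P \<longleftrightarrow>
     on_Q P \<and> (\<forall>v. lQ v = 0 \<and> qQ_deriv P v = 0 \<longrightarrow> v $ j = 0)"
  by (simp add: tangent_to_coord_hyperplane_def frechet_derivative_lQ frechet_derivative_qQ)

lemma tangent_imp_qQ_deriv_eq_0: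
  assumes "tangent_to_coord_hyperplane j P" "lQ w = 0" "w $ j = 0"
  shows "qQ_deriv P w = 0"
proof (rule kernel_inclusion_swap[OF linear_lQ linear_qQ_deriv linear_vec_nth])
  show "v $ j = 0" if "lQ v = 0" "qQ_deriv P v = 0" for v
    using assms(1) that by (simp add: tangent_to_coord_hyperplane_iff)
  \<comment> \<open>a vector in ker l with no zero coordinate, so it works for every j\<close>
  let ?u = "pt5 3 3 3 1 2"
  show "lQ ?u = 0" by (simp add: lQ_def)
  show "?u $ j \<noteq> 0" using exhaust_5[of j] by auto
qed (use assms in auto)

lemma tangent_if_qQ_deriv_eq:
  assumes "on_Q P" "b \<noteq> 0" "\<And>v. qQ_deriv P v = a * lQ v + b * v $ j"
  shows "tangent_to_coord_hyperplane j P"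
  using assms by (auto simp: tangent_to_coord_hyperplane_iff)

lemma tangent_to_coord_hyperplane_iff_proj_eq:
  assumes p: "on_Q p"
    and polar: "\<And>v. qQ_deriv p v = a * lQ v + b * v $ j" "b \<noteq> 0"
    and locus: "\<And>P. lQ P = 0 \<Longrightarrow> (\<And>w. lQ w = 0 \<Longrightarrow> w $ j = 0 \<Longrightarrow> qQ_deriv P w = 0)
                  \<Longrightarrow> P = P $ k *s p"
  shows "tangent_to_coord_hyperplane j P \<longleftrightarrow> proj_eq P p"
proof
  assume T: "tangent_to_coord_hyperplane j P"
  then have "on_Q P"
    by (simp add: tangent_to_coord_hyperplane_iff)
  define c where "c = P $ k"
  have c: "P = c *s p"
    using \<open>on_Q P\<close> locus tangent_imp_qQ_deriv_eq_0[OF T] by (simp add: c_def on_Q_def)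
  with \<open>on_Q P\<close> have "c \<noteq> 0"
    by (auto simp: on_Q_def)
  with c show "proj_eq P p"
    by (auto simp: proj_eq_def)
next
  assume "proj_eq P p"
  then obtain c where "c \<noteq> 0" and P: "P = c *s p"
    by (auto simp: proj_eq_def)
  show "tangent_to_coord_hyperplane j P"
  proof (rule tangent_if_qQ_deriv_eq)
    show "on_Q P"
      using p \<open>c \<noteq> 0\<close> by (auto simp: P on_Q_def lQ_scale qQ_scale vec_eq_iff)
    show "c * b \<noteq> 0"
      using \<open>c \<noteq> 0\<close> polar(2) by simp
    show "qQ_deriv P v = (c * a) * lQ v + (c * b) * v $ j" for v
      by (simp add: P qQ_deriv_scale polar(1) algebra_simps)
  qed
qed

lemma tangency_locus_0:
  assumes "lQ P = 0" "\<And>w. lQ w = 0 \<Longrightarrow> w $ 0 = 0 \<Longrightarrow> qQ_deriv P w = 0"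
  shows "P = P $ 3 *s pt5 0 3 3 1 1"
proof -
  have "qQ_deriv P (pt5 0 1 (-1) 0 0) = 0" "qQ_deriv P (pt5 0 3 0 0 1) = 0"
    "qQ_deriv P (pt5 0 3 0 1 0) = 0"
    by (intro assms(2); simp add: lQ_def)+
  with assms(1) show ?thesis
    unfolding vec5_eq_iff by (simp add: qQ_deriv_def lQ_def) algebra
qed

lemma tangency_locus_1:
  assumes "lQ P = 0" "\<And>w. lQ w = 0 \<Longrightarrow> w $ 1 = 0 \<Longrightarrow> qQ_deriv P w = 0"
  shows "P = P $ 3 *s pt5 3 0 3 1 1"
proof -
  have "qQ_deriv P (pt5 1 0 (-1) 0 0) = 0" "qQ_deriv P (pt5 3 0 0 0 1) = 0"
    "qQ_deriv P (pt5 3 0 0 1 0) = 0"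
    by (intro assms(2); simp add: lQ_def)+
  with assms(1) show ?thesis
    unfolding vec5_eq_iff by (simp add: qQ_deriv_def lQ_def) algebra
qed

lemma tangency_locus_2:
  assumes "lQ P = 0" "\<And>w. lQ w = 0 \<Longrightarrow> w $ 2 = 0 \<Longrightarrow> qQ_deriv P w = 0"
  shows "P = P $ 3 *s pt5 3 3 0 1 1"
proof -
  have "qQ_deriv P (pt5 1 (-1) 0 0 0) = 0" "qQ_deriv P (pt5 3 0 0 0 1) = 0"
    "qQ_deriv P (pt5 3 0 0 1 0) = 0"
    by (intro assms(2); simp add: lQ_def)+
  with assms(1) show ?thesis
    unfolding vec5_eq_iff by (simp add: qQ_deriv_def lQ_def) algebra
qed

lemma tangency_locus_3:
  assumes "lQ P = 0" "\<And>w. lQ w = 0 \<Longrightarrow> w $ 3 = 0 \<Longrightarrow> qQ_deriv P w = 0"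
  shows "P = P $ 0 *s pt5 1 1 1 0 1"
proof -
  have "qQ_deriv P (pt5 1 (-1) 0 0 0) = 0" "qQ_deriv P (pt5 0 1 (-1) 0 0) = 0"
    "qQ_deriv P (pt5 3 0 0 0 1) = 0"
    by (intro assms(2); simp add: lQ_def)+
  with assms(1) show ?thesis
    unfolding vec5_eq_iff by (simp add: qQ_deriv_def lQ_def)
qed

lemma tangency_locus_4:
  assumes "lQ P = 0" "\<And>w. lQ w = 0 \<Longrightarrow> w $ 4 = 0 \<Longrightarrow> qQ_deriv P w = 0"
  shows "P = P $ 0 *s pt5 1 1 1 1 0"
proof -
  have "qQ_deriv P (pt5 1 (-1) 0 0 0) = 0" "qQ_deriv P (pt5 0 1 (-1) 0 0) = 0"
    "qQ_deriv P (pt5 3 0 0 1 0) = 0"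
    by (intro assms(2); simp add: lQ_def)+
  with assms(1) show ?thesis
    unfolding vec5_eq_iff by (simp add: qQ_deriv_def lQ_def)
qed

lemma tangent_to_coord_hyperplane_0_iff:
  "tangent_to_coord_hyperplane 0 P \<longleftrightarrow> proj_eq P (pt5 0 3 3 1 1)"
  by (rule tangent_to_coord_hyperplane_iff_proj_eq[where a="0" and b="-9",
        OF _ _ _ tangency_locus_0])
    (simp_all add: on_Q_def lQ_def qQ_def qQ_deriv_def vec5_eq_iff)

lemma tangent_to_coord_hyperplane_1_iff:
  "tangent_to_coord_hyperplane 1 P \<longleftrightarrow> proj_eq P (pt5 3 0 3 1 1)"
  by (rule tangent_to_coord_hyperplane_iff_proj_eq[where a="0" and b="-9",
        OF _ _ _ tangency_locus_1])
    (simp_all add: on_Q_def lQ_def qQ_def qQ_deriv_def vec5_eq_iff)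

lemma tangent_to_coord_hyperplane_2_iff:
  "tangent_to_coord_hyperplane 2 P \<longleftrightarrow> proj_eq P (pt5 3 3 0 1 1)"
  by (rule tangent_to_coord_hyperplane_iff_proj_eq[where a="0" and b="-9",
        OF _ _ _ tangency_locus_2])
    (simp_all add: on_Q_def lQ_def qQ_def qQ_deriv_def vec5_eq_iff)

lemma tangent_to_coord_hyperplane_3_iff:
  "tangent_to_coord_hyperplane 3 P \<longleftrightarrow> proj_eq P (pt5 1 1 1 0 1)"
  by (rule tangent_to_coord_hyperplane_iff_proj_eq[where a="0" and b="-9",
        OF _ _ _ tangency_locus_3])
    (simp_all add: on_Q_def lQ_def qQ_def qQ_deriv_def vec5_eq_iff)

lemma tangent_to_coord_hyperplane_4_iff:
  "tangent_to_coord_hyperplane 4 P \<longleftrightarrow> proj_eq P (pt5 1 1 1 1 0)"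
  by (rule tangent_to_coord_hyperplane_iff_proj_eq[where a="-3" and b="-9",
        OF _ _ _ tangency_locus_4])
    (simp_all add: on_Q_def lQ_def qQ_def qQ_deriv_def vec5_eq_iff)

theorem mainTheorem13:
  shows "(\<forall>P. tangent_to_coord_hyperplane 0 P \<longleftrightarrow> proj_eq P (pt5 0 3 3 1 1)) \<and>
         (\<forall>P. tangent_to_coord_hyperplane 1 P \<longleftrightarrow> proj_eq P (pt5 3 0 3 1 1)) \<and>
         (\<forall>P. tangent_to_coord_hyperplane 2 P \<longleftrightarrow> proj_eq P (pt5 3 3 0 1 1)) \<and>
         (\<forall>P. tangent_to_coord_hyperplane 3 P \<longleftrightarrow> proj_eq P (pt5 1 1 1 0 1)) \<and>
         (\<forall>P. tangent_to_coord_hyperplane 4 P \<longleftrightarrow> proj_eq P (pt5 1 1 1 1 0))"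
  by (simp add: tangent_to_coord_hyperplane_0_iff tangent_to_coord_hyperplane_1_iff
      tangent_to_coord_hyperplane_2_iff tangent_to_coord_hyperplane_3_iff
      tangent_to_coord_hyperplane_4_iff)

end
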